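(* Let $\mathcal{S}$ be a free abelian group of infinite rank, in the signature $(+,-,0)$, and let $I$ be the set of subgroups $A\le\mathcal{S}$ of finite rank which are direct summands of $\mathcal{S}$ (there is $C\le\mathcal{S}$ with $\mathcal{S}=A\oplus C$), ordered by inclusion. Then $\lim_I\mathrm{Th}(A^* )=\mathrm{Th}(\mathcal{S}^* )$, where $A$ ranges over $I$.
   Context: For a structure $\mathcal{T}$ with universe $T$, $\mathrm{Th}(\mathcal{T}^* )$ is the set of sentences in $(+,-,0)$ expanded by a constant for each element of $T$ that are true in $\mathcal{T}$; these are regarded as subsets of the set of sentences with constants from the universe of $\mathcal{S}$. For a family $\{\Delta_i\}_{i\in I}$ indexed by a directed set: $\limsup_I \Delta_i=\{\theta: \forall i\ \exists j\ge i\ [\theta\in\Delta_j]\}$, $\liminf_I \Delta_i=\{\theta: \exists i\ \forall j\ge i\ [\theta\in\Delta_j]\}$, and $\lim_I\Delta_i=\Delta$ means both equal $\Delta$. *)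

theory Defs
  imports Main
begin

definition zsc :: "int \<Rightarrow> 'a::ab_group_add \<Rightarrow> 'a" where
  "zsc n x = (if 0 \<le> n then (\<Sum>i<nat n. x) else - (\<Sum>i<nat (- n). x))"

definition free_basis :: "'a::ab_group_add set \<Rightarrow> bool" where
  "free_basis B \<longleftrightarrow>
     (\<forall>x. \<exists>!c::'a \<Rightarrow> int. finite {b. c b \<noteq> 0} \<and> (\<forall>b. b \<notin> B \<longrightarrow> c b = 0) \<and>
            x = (\<Sum>b\<in>{b. c b \<noteq> 0}. zsc (c b) b))"

definition free_abelian_infinite_rank :: "'a::ab_group_add itself \<Rightarrow> bool" where
  "free_abelian_infinite_rank _ \<longleftrightarrow> (\<exists>B::'a set. free_basis B \<and> infinite B)"

definition subgrp :: "'a::ab_group_add set \<Rightarrow> bool" where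
  "subgrp A \<longleftrightarrow> 0 \<in> A \<and> (\<forall>x\<in>A. \<forall>y\<in>A. x + y \<in> A) \<and> (\<forall>x\<in>A. - x \<in> A)"

definition z_independent :: "'a::ab_group_add set \<Rightarrow> bool" where
  "z_independent F \<longleftrightarrow> finite F \<and>
     (\<forall>c::'a \<Rightarrow> int. (\<Sum>b\<in>F. zsc (c b) b) = 0 \<longrightarrow> (\<forall>b\<in>F. c b = 0))"

definition finite_rank :: "'a::ab_group_add set \<Rightarrow> bool" where
  "finite_rank A \<longleftrightarrow> (\<exists>n::nat. \<forall>F. F \<subseteq> A \<longrightarrow> z_independent F \<longrightarrow> card F \<le> n)"

definition direct_summand :: "'a::ab_group_add set \<Rightarrow> bool" where
  "direct_summand A \<longleftrightarrow> (\<exists>C. subgrp C \<and> A \<inter> C = {0} \<and>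
        (\<forall>x. \<exists>a\<in>A. \<exists>c\<in>C. x = a + c))"

datatype 'a tm = Var nat | Cst 'a | Zero | Plus "'a tm" "'a tm" | Minus "'a tm"

datatype 'a fm = Eq "'a tm" "'a tm" | FFalse | Neg "'a fm" | Conj "'a fm" "'a fm"
  | Disj "'a fm" "'a fm" | Imp "'a fm" "'a fm" | Ex nat "'a fm" | All nat "'a fm"

primrec tm_vars :: "'a tm \<Rightarrow> nat set" where
  "tm_vars (Var n) = {n}" | "tm_vars (Cst c) = {}" | "tm_vars Zero = {}"
| "tm_vars (Plus s t) = tm_vars s \<union> tm_vars t" | "tm_vars (Minus t) = tm_vars t"

primrec tm_consts :: "'a tm \<Rightarrow> 'a set" where
  "tm_consts (Var n) = {}" | "tm_consts (Cst c) = {c}" | "tm_consts Zero = {}"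
| "tm_consts (Plus s t) = tm_consts s \<union> tm_consts t" | "tm_consts (Minus t) = tm_consts t"

primrec fvars :: "'a fm \<Rightarrow> nat set" where
  "fvars (Eq s t) = tm_vars s \<union> tm_vars t" | "fvars FFalse = {}"
| "fvars (Neg p) = fvars p" | "fvars (Conj p q) = fvars p \<union> fvars q"
| "fvars (Disj p q) = fvars p \<union> fvars q" | "fvars (Imp p q) = fvars p \<union> fvars q"
| "fvars (Ex n p) = fvars p - {n}" | "fvars (All n p) = fvars p - {n}"

primrec fconsts :: "'a fm \<Rightarrow> 'a set" where
  "fconsts (Eq s t) = tm_consts s \<union> tm_consts t" | "fconsts FFalse = {}"
| "fconsts (Neg p) = fconsts p" | "fconsts (Conj p q) = fconsts p \<union> fconsts q"
| "fconsts (Disj p q) = fconsts p \<union> fconsts q" | "fconsts (Imp p q) = fconsts p \<union> fconsts q"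
| "fconsts (Ex n p) = fconsts p" | "fconsts (All n p) = fconsts p"

primrec tm_eval :: "(nat \<Rightarrow> 'a) \<Rightarrow> 'a tm \<Rightarrow> 'a::ab_group_add" where
  "tm_eval e (Var n) = e n" | "tm_eval e (Cst c) = c" | "tm_eval e Zero = 0"
| "tm_eval e (Plus s t) = tm_eval e s + tm_eval e t" | "tm_eval e (Minus t) = - tm_eval e t"

primrec sat :: "'a::ab_group_add set \<Rightarrow> (nat \<Rightarrow> 'a) \<Rightarrow> 'a fm \<Rightarrow> bool" where
  "sat A e (Eq s t) = (tm_eval e s = tm_eval e t)" | "sat A e FFalse = False"
| "sat A e (Neg p) = (\<not> sat A e p)" | "sat A e (Conj p q) = (sat A e p \<and> sat A e q)"
| "sat A e (Disj p q) = (sat A e p \<or> sat A e q)" | "sat A e (Imp p q) = (sat A e p \<longrightarrow> sat A e q)"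
| "sat A e (Ex n p) = (\<exists>a\<in>A. sat A (e(n := a)) p)"
| "sat A e (All n p) = (\<forall>a\<in>A. sat A (e(n := a)) p)"

text \<open>Th(A^*): sentences with constants from A true in the substructure A.
  The environment is irrelevant for sentences; we use the constant 0 environment.\<close>
definition Th :: "'a::ab_group_add set \<Rightarrow> 'a fm set" where
  "Th A = {\<phi>. fvars \<phi> = {} \<and> fconsts \<phi> \<subseteq> A \<and> sat A (\<lambda>_. 0) \<phi>}"

definition limsup_I :: "'i set set \<Rightarrow> ('i set \<Rightarrow> 'b set) \<Rightarrow> 'b set" where
  "limsup_I I D = {\<theta>. \<forall>i\<in>I. \<exists>j\<in>I. i \<subseteq> j \<and> \<theta> \<in> D j}"

definition liminf_I :: "'i set set \<Rightarrow> ('i set \<Rightarrow> 'b set) \<Rightarrow> 'b set" where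
  "liminf_I I D = {\<theta>. \<exists>i\<in>I. \<forall>j\<in>I. i \<subseteq> j \<longrightarrow> \<theta> \<in> D j}"

definition has_lim_I :: "'i set set \<Rightarrow> ('i set \<Rightarrow> 'b set) \<Rightarrow> 'b set \<Rightarrow> bool" where
  "has_lim_I I D L \<longleftrightarrow> limsup_I I D = L \<and> liminf_I I D = L"

end

theory Submission
  imports Defs "HOL.Modules"
begin

text \<open>Fix a basis \<open>B\<close> of the free abelian group. The constants of a sentence \<open>\<theta>\<close> have their
  coordinates on a finite \<open>G \<subseteq> B\<close>. If a pure subgroup \<open>A\<close> (such as a direct summand) contains
  \<open>G\<close> and \<open>depth \<theta>\<close> further basis elements, then \<open>A\<close> and the whole group agree on \<open>\<theta>\<close>, by an
  Ehrenfeucht-Fraisse argument. A position consists of two frames of the same length,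
  elements \<open>E\<^sub>i\<close> with additive functionals \<open>L\<^sub>i\<close> such that \<open>L\<^sub>i (E\<^sub>j) = \<delta>\<^sub>i\<^sub>j\<close>, and elements
  correspond when they have the same \<open>E\<close>-coordinates. A new element \<open>a\<close> splits as
  \<open>\<Sum>\<^sub>i L\<^sub>i(a) E\<^sub>i + m e\<close> with \<open>e\<close> primitive and killed by all \<open>L\<^sub>i\<close> (purity keeps \<open>e\<close> in \<open>A\<close>);
  the answer is \<open>\<Sum>\<^sub>i L\<^sub>i(a) E'\<^sub>i + m e'\<close>, where a primitive \<open>e'\<close> killed by the \<open>L'\<^sub>i\<close> is found
  among the unused basis elements on the other side. Finally, every finite-rank summand lies in
  the span of a finite subset of \<open>B\<close>, and these spans are again finite-rank summands, so
  \<open>Th A\<close> is eventually constant along them, equal to \<open>Th UNIV\<close>.\<close>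

lemma zsc_0 [simp]: "zsc 0 x = 0"
  by (simp add: zsc_def)

lemma zsc_succ: "zsc (n + 1) x = zsc n x + x"
proof (cases "0 \<le> n")
  case True
  then have "nat (n + 1) = Suc (nat n)" by simp
  then show ?thesis using True by (simp add: zsc_def add.commute)
next
  case False
  then have "nat (- n) = Suc (nat (- (n + 1)))" by simp
  then show ?thesis using False by (auto simp add: zsc_def add.commute)
qed

lemma zsc_pred: "zsc (n - 1) x = zsc n x - x"
  using zsc_succ[of "n - 1" x] by simp

lemma zsc_1 [simp]: "zsc 1 x = x"
  using zsc_succ[of 0 x] by simp

lemma zsc_add: "zsc (m + n) x = zsc m x + zsc n x"
proof (induction n rule: int_induct[where k = 0])
  case (step1 i)
  then show ?case using zsc_succ[of "m + i" x] zsc_succ[of i x] by (simp add: add.assoc)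
next
  case (step2 i)
  then show ?case using zsc_pred[of "m + i" x] zsc_pred[of i x] by (simp add: diff_add_eq add_diff_eq)
qed simp

lemma zsc_minus: "zsc (- n) x = - zsc n x"
  using zsc_add[of "- n" n x] by (simp add: eq_neg_iff_add_eq_0)

lemma zsc_add_right: "zsc n (x + y) = zsc n x + zsc n y"
proof (induction n rule: int_induct[where k = 0])
  case (step1 i)
  then show ?case by (simp only: zsc_succ) (simp add: algebra_simps)
next
  case (step2 i)
  then show ?case by (simp only: zsc_pred) (simp add: algebra_simps)
qed simp

lemma zsc_int [simp]: "zsc n (k :: int) = n * k"
  by (induction n rule: int_induct[where k = 0]) (simp_all add: zsc_succ zsc_pred algebra_simps)

lemma (in additive) zsc: "f (zsc n x) = zsc n (f x)"
proof (induction n rule: int_induct[where k = 0])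
  case (step1 i)
  then show ?case by (simp add: zsc_succ add)
next
  case (step2 i)
  then show ?case by (simp add: zsc_pred diff)
qed (simp add: zero)

lemma subgrp_diff: "subgrp X \<Longrightarrow> x \<in> X \<Longrightarrow> y \<in> X \<Longrightarrow> x - y \<in> X"
  unfolding subgrp_def by (metis diff_conv_add_uminus)

lemma subgrp_zsc: "subgrp X \<Longrightarrow> x \<in> X \<Longrightarrow> zsc n x \<in> X"
proof (induction n rule: int_induct[where k = 0])
  case base
  then show ?case by (simp add: subgrp_def)
next
  case (step1 i)
  then show ?case unfolding zsc_succ subgrp_def by blast
next
  case (step2 i)
  then show ?case unfolding zsc_pred using subgrp_diff by blast
qed

lemma subgrp_sum: "subgrp X \<Longrightarrow> (\<And>t. t \<in> T \<Longrightarrow> g t \<in> X) \<Longrightarrow> sum g T \<in> X"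
  by (induction T rule: infinite_finite_induct) (auto simp: subgrp_def)

lemma subgrp_lincomb: "subgrp X \<Longrightarrow> T \<subseteq> X \<Longrightarrow> (\<Sum>t\<in>T. zsc (k t) t) \<in> X"
  by (auto intro: subgrp_sum subgrp_zsc)

text \<open>Gaussian elimination over \<open>\<int>\<close>: a pivot \<open>v i0 j0 \<noteq> 0\<close> eliminates the column \<open>j0\<close>
  by cross-multiplication, so no division is needed.\<close>
lemma int_linear_dependence:
  fixes v :: "'i \<Rightarrow> 'j \<Rightarrow> int"
  assumes "finite J" "finite I" "card J < card I"
  shows "\<exists>n. (\<exists>i\<in>I. n i \<noteq> 0) \<and> (\<forall>j\<in>J. (\<Sum>i\<in>I. n i * v i j) = 0)"
  using assms
proof (induction J arbitrary: I v rule: finite_induct)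
  case empty
  then show ?case by (intro exI[of _ "\<lambda>_. 1"]) (auto simp: card_gt_0_iff)
next
  case (insert j0 J)
  show ?case
  proof (cases "\<forall>i\<in>I. v i j0 = 0")
    case True
    from insert have "card J < card I" by simp
    from insert.IH[OF insert.prems(1) this] obtain n where
      "\<exists>i\<in>I. n i \<noteq> 0" "\<forall>j\<in>J. (\<Sum>i\<in>I. n i * v i j) = 0" by blast
    with True show ?thesis by auto
  next
    case False
    then obtain i0 where i0: "i0 \<in> I" "v i0 j0 \<noteq> 0" by blast
    define I' where "I' = I - {i0}"
    have "card J < card I'" "finite I'" using insert i0 by (simp_all add: I'_def)
    then obtain m where m: "\<exists>i\<in>I'. m i \<noteq> 0"
      "\<forall>j\<in>J. (\<Sum>i\<in>I'. m i * (v i0 j0 * v i j - v i j0 * v i0 j)) = 0"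
      using insert.IH[of I' "\<lambda>i j. v i0 j0 * v i j - v i j0 * v i0 j"] by blast
    define n where "n i = (if i = i0 then - (\<Sum>k\<in>I'. m k * v k j0) else v i0 j0 * m i)" for i
    have split: "(\<Sum>i\<in>I. n i * v i j) = n i0 * v i0 j + (\<Sum>i\<in>I'. v i0 j0 * m i * v i j)" for j
    proof -
      have "(\<Sum>i\<in>I. n i * v i j) = n i0 * v i0 j + (\<Sum>i\<in>I'. n i * v i j)"
        unfolding I'_def using i0 insert.prems by (simp add: sum.remove)
      also have "(\<Sum>i\<in>I'. n i * v i j) = (\<Sum>i\<in>I'. v i0 j0 * m i * v i j)"
        by (rule sum.cong) (auto simp: n_def I'_def)
      finally show ?thesis .
    qed
    have "(\<Sum>i\<in>I. n i * v i j) = (\<Sum>i\<in>I'. m i * (v i0 j0 * v i j - v i j0 * v i0 j))" for j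
    proof -
      have "(\<Sum>i\<in>I'. m i * (v i0 j0 * v i j - v i j0 * v i0 j))
          = (\<Sum>i\<in>I'. v i0 j0 * m i * v i j) - (\<Sum>k\<in>I'. m k * v k j0) * v i0 j"
        by (simp only: sum_distrib_right sum_subtractf[symmetric]) (rule sum.cong, simp_all add: algebra_simps)
      then show ?thesis unfolding split by (simp add: n_def)
    qed
    then have "\<forall>j\<in>insert j0 J. (\<Sum>i\<in>I. n i * v i j) = 0"
      using m(2) by auto
    moreover have "\<exists>i\<in>I. n i \<noteq> 0" using m(1) i0 by (auto simp: n_def I'_def)
    ultimately show ?thesis by blast
  qed
qed

lemma Gcd_int_bezout:
  fixes v :: "'b \<Rightarrow> int"
  assumes "finite T"
  shows "\<exists>u. (\<Sum>b\<in>T. u b * v b) = Gcd (v ` T)"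
  using assms
proof (induction T rule: finite_induct)
  case (insert x T)
  then obtain u where u: "(\<Sum>b\<in>T. u b * v b) = Gcd (v ` T)" by blast
  obtain s t where st: "s * v x + t * Gcd (v ` T) = gcd (v x) (Gcd (v ` T))"
    using bezout_int by blast
  define u' where "u' b = (if b = x then s else t * u b)" for b
  have "(\<Sum>b\<in>T. u' b * v b) = (\<Sum>b\<in>T. t * (u b * v b))"
    by (rule sum.cong) (use insert in \<open>auto simp: u'_def\<close>)
  then have "(\<Sum>b\<in>insert x T. u' b * v b) = s * v x + t * (\<Sum>b\<in>T. u b * v b)"
    using insert by (simp add: u'_def sum_distrib_left)
  then show ?case using u st by auto
qed simp

definition primitive :: "'a::ab_group_add \<Rightarrow> bool" where
  "primitive e \<longleftrightarrow> (\<exists>\<mu> :: 'a \<Rightarrow> int. additive \<mu> \<and> \<mu> e = 1)"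

definition pure_subgrp :: "'a::ab_group_add set \<Rightarrow> bool" where
  "pure_subgrp X \<longleftrightarrow> subgrp X \<and> (\<forall>m x. m \<noteq> 0 \<longrightarrow> zsc m x \<in> X \<longrightarrow> x \<in> X)"

lemma pure_subgrp_UNIV: "pure_subgrp UNIV"
  by (simp add: pure_subgrp_def subgrp_def)

section \<open>Frames\<close>

definition lincomb :: "(nat \<Rightarrow> 'a::ab_group_add) \<Rightarrow> nat \<Rightarrow> (nat \<Rightarrow> int) \<Rightarrow> 'a" where
  "lincomb E r n = (\<Sum>i<r. zsc (n i) (E i))"

text \<open>A biorthogonal system in \<open>X\<close>; the functionals are defined on the whole group.\<close>
definition frame :: "'a::ab_group_add set \<Rightarrow> nat \<Rightarrow> (nat \<Rightarrow> 'a) \<Rightarrow> (nat \<Rightarrow> 'a \<Rightarrow> int) \<Rightarrow> bool" where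
  "frame X r E L \<longleftrightarrow> (\<forall>i<r. E i \<in> X) \<and> (\<forall>i<r. additive (L i)) \<and>
     (\<forall>i<r. \<forall>j<r. L i (E j) = (if i = j then 1 else 0))"

definition same_coords :: "(nat \<Rightarrow> 'a::ab_group_add) \<Rightarrow> (nat \<Rightarrow> 'a) \<Rightarrow> nat \<Rightarrow> 'a \<Rightarrow> 'a \<Rightarrow> bool" where
  "same_coords E E' r x y \<longleftrightarrow> (\<exists>n. x = lincomb E r n \<and> y = lincomb E' r n)"

lemma same_coords_sym: "same_coords E E' r x y \<longleftrightarrow> same_coords E' E r y x"
  unfolding same_coords_def by blast

lemma lincomb_add: "lincomb E r n + lincomb E r m = lincomb E r (\<lambda>i. n i + m i)"
  unfolding lincomb_def by (simp add: zsc_add sum.distrib)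

lemma lincomb_minus: "- lincomb E r n = lincomb E r (\<lambda>i. - n i)"
  unfolding lincomb_def by (simp add: zsc_minus sum_negf)

lemma lincomb_zero: "lincomb E r (\<lambda>_. 0) = 0"
  unfolding lincomb_def by simp

lemma lincomb_cong:
  "(\<And>i. i < r \<Longrightarrow> E i = E2 i) \<Longrightarrow> (\<And>i. i < r \<Longrightarrow> n i = n2 i) \<Longrightarrow> lincomb E r n = lincomb E2 r n2"
  unfolding lincomb_def by (rule sum.cong) auto

lemma lincomb_fun_upd: "lincomb (E(r := e)) (Suc r) (n(r := m)) = lincomb E r n + zsc m e"
proof -
  have "lincomb (E(r := e)) r (n(r := m)) = lincomb E r n"
    by (rule lincomb_cong) auto
  then show ?thesis by (simp add: lincomb_def)
qed

lemma subgrp_lincomb_frame: "subgrp X \<Longrightarrow> frame X r E L \<Longrightarrow> lincomb E r n \<in> X"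
  unfolding lincomb_def frame_def by (rule subgrp_sum) (auto intro: subgrp_zsc)

lemma frame_lincomb:
  assumes "frame X r E L" "i < r"
  shows "L i (lincomb E r n) = n i"
proof -
  have "additive (L i)" using assms frame_def by blast
  then have "L i (lincomb E r n) = (\<Sum>j<r. n j * L i (E j))"
    unfolding lincomb_def by (simp add: additive.sum additive.zsc)
  also have "\<dots> = (\<Sum>j<r. if j = i then n j else 0)"
    by (rule sum.cong) (use assms in \<open>auto simp: frame_def\<close>)
  finally show ?thesis using assms(2) by simp
qed

lemma lincomb_eq_iff:
  assumes "frame X r E L"
  shows "lincomb E r n = lincomb E r m \<longleftrightarrow> (\<forall>i<r. n i = m i)"
proof
  show "lincomb E r n = lincomb E r m \<Longrightarrow> \<forall>i<r. n i = m i"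
    using frame_lincomb[OF assms] by metis
qed (auto intro: lincomb_cong)

lemma same_coords_extend:
  "same_coords E E' r x y \<Longrightarrow> same_coords (E(r := e)) (E'(r := e')) (Suc r) x y"
proof -
  assume "same_coords E E' r x y"
  then obtain n where "x = lincomb E r n" "y = lincomb E' r n"
    unfolding same_coords_def by blast
  then have "x = lincomb (E(r := e)) (Suc r) (n(r := 0))" "y = lincomb (E'(r := e')) (Suc r) (n(r := 0))"
    by (simp_all only: lincomb_fun_upd zsc_0 add_0_right)
  then show ?thesis unfolding same_coords_def by blast
qed

lemma same_coords_tm_eval:
  "(\<forall>v\<in>tm_vars t. same_coords E E' r (\<sigma> v) (\<tau> v)) \<Longrightarrow> (\<forall>c\<in>tm_consts t. same_coords E E' r c c) \<Longrightarrow>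
   same_coords E E' r (tm_eval \<sigma> t) (tm_eval \<tau> t)"
proof (induction t)
  case Zero
  then show ?case unfolding same_coords_def using lincomb_zero by (metis tm_eval.simps(3))
next
  case (Plus s t)
  then obtain n m where "tm_eval \<sigma> s = lincomb E r n" "tm_eval \<tau> s = lincomb E' r n"
    "tm_eval \<sigma> t = lincomb E r m" "tm_eval \<tau> t = lincomb E' r m"
    unfolding same_coords_def by auto
  then show ?case unfolding same_coords_def by (auto simp: lincomb_add)
next
  case (Minus t)
  then obtain n where "tm_eval \<sigma> t = lincomb E r n" "tm_eval \<tau> t = lincomb E' r n"
    unfolding same_coords_def by auto
  then show ?case unfolding same_coords_def by (auto simp: lincomb_minus)
qed auto

text \<open>Subtracting \<open>\<Sum>j<r. \<mu> (E j) * L j\<close> from a functional \<open>\<mu>\<close> with \<open>\<mu> e = 1\<close> makes it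
  vanish on the old frame elements without changing its value at \<open>e\<close>.\<close>
lemma frame_extend:
  fixes X :: "'a::ab_group_add set"
  assumes "frame X r E L" "e \<in> X" "\<forall>i<r. L i e = 0" "primitive e"
  shows "\<exists>L'. frame X (Suc r) (E(r := e)) L'"
proof -
  obtain \<mu> :: "'a \<Rightarrow> int" where \<mu>: "additive \<mu>" "\<mu> e = 1"
    using assms(4) unfolding primitive_def by blast
  let ?\<mu> = "\<lambda>x. \<mu> x - (\<Sum>j<r. \<mu> (E j) * L j x)"
  have L: "\<forall>i<r. additive (L i)" using assms(1) frame_def by blast
  have "additive ?\<mu>"
    by unfold_locales
      (simp add: additive.add[OF \<mu>(1)] additive.add[OF L[rule_format]] distrib_left sum.distrib)
  moreover have "?\<mu> (E i) = 0" if "i < r" for i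
  proof -
    have "(\<Sum>j<r. \<mu> (E j) * L j (E i)) = (\<Sum>j<r. if j = i then \<mu> (E j) else 0)"
      by (rule sum.cong) (use assms(1) that in \<open>auto simp: frame_def\<close>)
    then show ?thesis using that by simp
  qed
  moreover have "?\<mu> e = 1" using assms(3) \<mu>(2) by simp
  ultimately have "frame X (Suc r) (E(r := e)) (L(r := ?\<mu>))"
    using assms(1,2,3) L unfolding frame_def less_Suc_eq by fastforce
  then show ?thesis by blast
qed

primrec depth :: "'a fm \<Rightarrow> nat" where
  "depth (Eq s t) = 0"
| "depth FFalse = 0"
| "depth (Neg p) = depth p"
| "depth (Conj p q) = max (depth p) (depth q)"
| "depth (Disj p q) = max (depth p) (depth q)"
| "depth (Imp p q) = max (depth p) (depth q)"
| "depth (Ex n p) = Suc (depth p)"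
| "depth (All n p) = Suc (depth p)"

lemma finite_tm_consts: "finite (tm_consts t)"
  by (induction t) auto

lemma finite_fconsts: "finite (fconsts \<phi>)"
  by (induction \<phi>) (auto simp: finite_tm_consts)

abbreviation finite_rank_summands :: "'a::ab_group_add set set" where
  "finite_rank_summands \<equiv> {A. subgrp A \<and> finite_rank A \<and> direct_summand A}"

lemma has_lim_I_if_eventually_constant:
  assumes directed: "\<And>i i'. i \<in> I \<Longrightarrow> i' \<in> I \<Longrightarrow> \<exists>j\<in>I. i \<subseteq> j \<and> i' \<subseteq> j"
    and eventually: "\<And>\<theta>. \<exists>i\<in>I. \<forall>j\<in>I. i \<subseteq> j \<longrightarrow> (\<theta> \<in> D j \<longleftrightarrow> \<theta> \<in> L)"
  shows "has_lim_I I D L"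
proof -
  have "\<theta> \<in> limsup_I I D \<longleftrightarrow> \<theta> \<in> L" "\<theta> \<in> liminf_I I D \<longleftrightarrow> \<theta> \<in> L" for \<theta>
  proof -
    obtain i0 where i0: "i0 \<in> I" "\<forall>j\<in>I. i0 \<subseteq> j \<longrightarrow> (\<theta> \<in> D j \<longleftrightarrow> \<theta> \<in> L)"
      using eventually[of \<theta>] ..
    have upper: "\<exists>j\<in>I. i \<subseteq> j \<and> i0 \<subseteq> j" if "i \<in> I" for i
      using directed[OF that i0(1)] .
    show "\<theta> \<in> limsup_I I D \<longleftrightarrow> \<theta> \<in> L"
    proof
      assume "\<theta> \<in> limsup_I I D"
      then obtain j where "j \<in> I" "i0 \<subseteq> j" "\<theta> \<in> D j"
        using i0(1) unfolding limsup_I_def by blast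
      then show "\<theta> \<in> L" using i0(2) by blast
    next
      assume "\<theta> \<in> L"
      have "\<exists>j\<in>I. i \<subseteq> j \<and> \<theta> \<in> D j" if "i \<in> I" for i
        using upper[OF that] i0(2) \<open>\<theta> \<in> L\<close> by blast
      then show "\<theta> \<in> limsup_I I D" unfolding limsup_I_def by blast
    qed
    show "\<theta> \<in> liminf_I I D \<longleftrightarrow> \<theta> \<in> L"
    proof
      assume "\<theta> \<in> liminf_I I D"
      then obtain i where "i \<in> I" "\<And>j. j \<in> I \<Longrightarrow> i \<subseteq> j \<Longrightarrow> \<theta> \<in> D j"
        unfolding liminf_I_def by blast
      then show "\<theta> \<in> L" using upper i0(2) by blast
    next
      assume "\<theta> \<in> L"
      then show "\<theta> \<in> liminf_I I D" unfolding liminf_I_def using i0 by blast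
    qed
  qed
  then show ?thesis unfolding has_lim_I_def by blast
qed

section \<open>Coordinates with respect to a free basis\<close>

locale free_abelian_basis =
  fixes B :: "'a::ab_group_add set"
  assumes free_basis: "free_basis B"
begin

definition is_coords :: "'a \<Rightarrow> ('a \<Rightarrow> int) \<Rightarrow> bool" where
  "is_coords x c \<longleftrightarrow> finite {b. c b \<noteq> 0} \<and> (\<forall>b. b \<notin> B \<longrightarrow> c b = 0) \<and>
     x = (\<Sum>b\<in>{b. c b \<noteq> 0}. zsc (c b) b)"

definition coord :: "'a \<Rightarrow> 'a \<Rightarrow> int" where
  "coord x = (THE c. is_coords x c)"

lemma ex1_coords: "\<exists>!c. is_coords x c"
  using free_basis unfolding free_basis_def is_coords_def by blast

lemma is_coords_coord: "is_coords x (coord x)"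
  unfolding coord_def using ex1_coords by (rule theI')

lemma coords_unique: "is_coords x c \<Longrightarrow> c = coord x"
  using ex1_coords is_coords_coord by blast

lemma finite_coord_support: "finite {b. coord x b \<noteq> 0}"
  using is_coords_coord unfolding is_coords_def by blast

lemma coord_nonbasis: "b \<notin> B \<Longrightarrow> coord x b = 0"
  using is_coords_coord unfolding is_coords_def by blast

lemma coord_expansion:
  assumes "finite T" "{b. coord x b \<noteq> 0} \<subseteq> T"
  shows "x = (\<Sum>b\<in>T. zsc (coord x b) b)"
proof -
  have "(\<Sum>b\<in>T. zsc (coord x b) b) = (\<Sum>b\<in>{b. coord x b \<noteq> 0}. zsc (coord x b) b)"
    by (rule sum.mono_neutral_right) (use assms in auto)
  then show ?thesis using is_coords_coord unfolding is_coords_def by simp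
qed

lemma coord_eqI:
  assumes "finite T" "\<And>b. c b \<noteq> 0 \<Longrightarrow> b \<in> T" "\<And>b. b \<notin> B \<Longrightarrow> c b = 0"
    and "x = (\<Sum>b\<in>T. zsc (c b) b)"
  shows "coord x = c"
proof -
  have "(\<Sum>b\<in>T. zsc (c b) b) = (\<Sum>b\<in>{b. c b \<noteq> 0}. zsc (c b) b)"
    by (rule sum.mono_neutral_right) (use assms in auto)
  moreover have "finite {b. c b \<noteq> 0}"
    using assms(1,2) finite_subset[of "{b. c b \<noteq> 0}" T] by blast
  ultimately have "is_coords x c" unfolding is_coords_def using assms(3,4) by simp
  then show ?thesis using coords_unique by simp
qed

lemma coord_inject: "coord x = coord y \<Longrightarrow> x = y"
  by (metis coord_expansion finite_coord_support order_refl)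

lemma coord_add: "coord (x + y) b = coord x b + coord y b"
proof -
  define T where "T = {b. coord x b \<noteq> 0} \<union> {b. coord y b \<noteq> 0}"
  have T: "finite T" using finite_coord_support by (simp add: T_def)
  have "x + y = (\<Sum>b\<in>T. zsc (coord x b) b) + (\<Sum>b\<in>T. zsc (coord y b) b)"
    using coord_expansion[OF T] by (simp add: T_def)
  also have "\<dots> = (\<Sum>b\<in>T. zsc (coord x b + coord y b) b)"
    by (simp only: zsc_add sum.distrib)
  finally have "coord (x + y) = (\<lambda>b. coord x b + coord y b)"
    by (intro coord_eqI[OF T]) (auto simp: T_def coord_nonbasis)
  then show ?thesis by simp
qed

lemma additive_coord: "additive (\<lambda>x. coord x b)"
  by unfold_locales (rule coord_add)

lemmas coord_0 [simp] = additive.zero[OF additive_coord]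
lemmas coord_diff = additive.diff[OF additive_coord]
lemmas coord_sum = additive.sum[OF additive_coord]

lemma coord_zsc [simp]: "coord (zsc n x) b = n * coord x b"
  using additive.zsc[OF additive_coord] by simp

lemma coord_basis:
  assumes "a \<in> B"
  shows "coord a b = (if b = a then 1 else 0)"
proof -
  have "coord a = (\<lambda>b. if b = a then 1 else 0)"
    by (rule coord_eqI[where T = "{a}"]) (use assms in \<open>auto split: if_splits\<close>)
  then show ?thesis by simp
qed

lemma coord_lincomb:
  assumes "finite T" "T \<subseteq> B"
  shows "coord (\<Sum>t\<in>T. zsc (k t) t) b = (if b \<in> T then k b else 0)"
proof -
  have "coord (\<Sum>t\<in>T. zsc (k t) t) b = (\<Sum>t\<in>T. k t * (if b = t then 1 else 0))"
    using assms by (simp add: coord_sum coord_basis subsetD)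
  also have "\<dots> = (\<Sum>t\<in>T. if b = t then k t else 0)"
    by (rule sum.cong) auto
  finally show ?thesis using assms(1) by (simp add: sum.delta)
qed

lemma coord_eq_0_imp: "(\<And>b. coord x b = 0) \<Longrightarrow> x = 0"
  by (rule coord_inject) (simp add: fun_eq_iff)

lemma torsion_free:
  fixes x :: 'a
  shows "zsc m x = 0 \<Longrightarrow> m \<noteq> 0 \<Longrightarrow> x = 0"
  by (rule coord_eq_0_imp) (metis coord_0 coord_zsc mult_eq_0_iff)

text \<open>The functional \<open>\<mu>\<close> is a Bezout combination of the coordinates of \<open>c\<close>, which are
  \<open>g\<close> times the coprime coordinates of \<open>e\<close>, \<open>g\<close> being their gcd.\<close>
lemma primitive_factor:
  fixes c :: 'a
  assumes "c \<noteq> 0"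
  shows "\<exists>m e. m \<noteq> 0 \<and> c = zsc m e \<and> primitive e"
proof -
  define T where "T = {b. coord c b \<noteq> 0}"
  have T: "finite T" "T \<subseteq> B" using finite_coord_support coord_nonbasis by (auto simp: T_def)
  define g where "g = Gcd (coord c ` T)"
  obtain u where u: "(\<Sum>b\<in>T. u b * coord c b) = g"
    using Gcd_int_bezout[OF T(1), of "coord c"] unfolding g_def by blast
  have g_dvd: "g dvd coord c b" for b
    by (cases "b \<in> T") (simp_all add: g_def T_def)
  have "g \<noteq> 0"
  proof
    assume "g = 0"
    then have "coord c b = 0" for b using g_dvd[of b] by simp
    then show False using assms coord_eq_0_imp by blast
  qed
  define e where "e = (\<Sum>b\<in>T. zsc (coord c b div g) b)"
  define \<mu> where "\<mu> x = (\<Sum>b\<in>T. u b * coord x b)" for x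
  have coord_e: "coord e b = (if b \<in> T then coord c b div g else 0)" for b
    unfolding e_def using coord_lincomb[OF T] by simp
  have "coord (zsc g e) b = coord c b" for b
    using g_dvd[of b] by (auto simp: coord_e T_def)
  then have "c = zsc g e" by (intro coord_inject ext) simp
  moreover have "additive \<mu>"
    by unfold_locales (simp add: \<mu>_def coord_add distrib_left sum.distrib)
  moreover have "\<mu> e = 1"
  proof -
    have "\<mu> e = (\<Sum>b\<in>T. u b * (coord c b div g))"
      unfolding \<mu>_def by (rule sum.cong) (simp_all add: coord_e)
    then have "g * \<mu> e = (\<Sum>b\<in>T. u b * (g * (coord c b div g)))"
      by (simp add: sum_distrib_left mult.left_commute)
    also have "\<dots> = g" using u by (simp add: g_dvd)
    finally show ?thesis using \<open>g \<noteq> 0\<close> by simp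
  qed
  ultimately show ?thesis using \<open>g \<noteq> 0\<close> unfolding primitive_def by blast
qed

lemma pure_if_direct_summand:
  fixes A :: "'a set"
  assumes "subgrp A" "direct_summand A"
  shows "pure_subgrp A"
  unfolding pure_subgrp_def
proof (intro conjI allI impI)
  fix m x
  assume m: "m \<noteq> 0" and mx: "zsc m x \<in> A"
  obtain C where C: "subgrp C" "A \<inter> C = {0}" "\<forall>x. \<exists>a\<in>A. \<exists>c\<in>C. x = a + c"
    using assms(2) unfolding direct_summand_def by blast
  obtain a c where ac: "a \<in> A" "c \<in> C" "x = a + c" using C(3) by blast
  have "zsc m c = zsc m x - zsc m a" using ac by (simp add: zsc_add_right)
  also have "\<dots> \<in> A" using subgrp_diff[OF assms(1) mx subgrp_zsc[OF assms(1) ac(1)]] .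
  finally have "zsc m c \<in> A" .
  moreover have "zsc m c \<in> C" by (rule subgrp_zsc[OF C(1) ac(2)])
  ultimately have "zsc m c = 0" using C(2) by auto
  then have "c = 0" by (rule torsion_free[OF _ m])
  then show "x \<in> A" using ac by simp
qed (fact assms(1))

definition basis_span :: "'a set \<Rightarrow> 'a set" where
  "basis_span F = {x. \<forall>b. coord x b \<noteq> 0 \<longrightarrow> b \<in> F}"

lemma subgrp_basis_span: "subgrp (basis_span F)"
  unfolding subgrp_def basis_span_def
  by (auto simp: coord_add additive.minus[OF additive_coord]) (metis add.right_neutral)

lemma basis_span_mono: "F \<subseteq> F' \<Longrightarrow> basis_span F \<subseteq> basis_span F'"
  unfolding basis_span_def by auto

lemma subset_basis_span: "F \<subseteq> B \<Longrightarrow> F \<subseteq> basis_span F"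
  unfolding basis_span_def using coord_basis by (auto split: if_splits)

lemma direct_summand_basis_span:
  assumes "finite F" "F \<subseteq> B"
  shows "direct_summand (basis_span F)"
  unfolding direct_summand_def
proof (intro exI conjI allI)
  let ?C = "{x. \<forall>b\<in>F. coord x b = 0}"
  show "subgrp ?C"
    unfolding subgrp_def by (auto simp: coord_add additive.minus[OF additive_coord])
  have "y = 0" if "y \<in> basis_span F \<inter> ?C" for y
    using that by (intro coord_eq_0_imp) (auto simp: basis_span_def)
  then show "basis_span F \<inter> ?C = {0}"
    using subgrp_basis_span[of F] unfolding subgrp_def by auto
  fix x
  define x1 where "x1 = (\<Sum>b\<in>F. zsc (coord x b) b)"
  have coord_x1: "coord x1 b = (if b \<in> F then coord x b else 0)" for b
    unfolding x1_def using coord_lincomb[OF assms] by simp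
  have "x1 \<in> basis_span F" by (simp add: basis_span_def coord_x1)
  moreover have "x - x1 \<in> ?C" by (simp add: coord_diff coord_x1)
  ultimately show "\<exists>a\<in>basis_span F. \<exists>c\<in>?C. x = a + c" by force
qed

lemma finite_rank_basis_span:
  assumes "finite F"
  shows "finite_rank (basis_span F)"
  unfolding finite_rank_def
proof (intro exI allI impI)
  fix M
  assume sub: "M \<subseteq> basis_span F" and ind: "z_independent M"
  show "card M \<le> card F"
  proof (rule ccontr)
    assume "\<not> card M \<le> card F"
    moreover have "finite M" using ind z_independent_def by blast
    ultimately obtain n where n: "\<exists>y\<in>M. n y \<noteq> 0" "\<forall>b\<in>F. (\<Sum>y\<in>M. n y * coord y b) = 0"
      using int_linear_dependence[OF assms, of M "\<lambda>y b. coord y b"] by auto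
    have "coord (\<Sum>y\<in>M. zsc (n y) y) b = 0" for b
    proof (cases "b \<in> F")
      case False
      then have "\<forall>y\<in>M. coord y b = 0" using sub by (auto simp: basis_span_def)
      then show ?thesis by (simp add: coord_sum)
    qed (use n(2) in \<open>simp add: coord_sum\<close>)
    then have "(\<Sum>y\<in>M. zsc (n y) y) = 0" by (rule coord_eq_0_imp)
    then show False using ind n(1) unfolding z_independent_def by blast
  qed
qed

text \<open>An element \<open>x\<close> that makes an independent set \<open>M\<close> dependent has a nonzero multiple
  in the span of \<open>M\<close>, so its coordinates are supported where those of \<open>M\<close> are.\<close>
lemma in_basis_span_if_dependent:
  assumes "z_independent M" "\<not> z_independent (insert x M)" "x \<notin> M"
  shows "x \<in> basis_span (\<Union>y\<in>M. {b. coord y b \<noteq> 0})"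
proof -
  have M: "finite M" using assms(1) z_independent_def by blast
  obtain c where c: "(\<Sum>y\<in>insert x M. zsc (c y) y) = 0" "\<exists>y\<in>insert x M. c y \<noteq> 0"
    using assms(2) M unfolding z_independent_def by auto
  have sum: "zsc (c x) x + (\<Sum>y\<in>M. zsc (c y) y) = 0"
    using c(1) assms(3) M by simp
  have "c x \<noteq> 0"
  proof
    assume "c x = 0"
    then have "(\<Sum>y\<in>M. zsc (c y) y) = 0" "\<exists>y\<in>M. c y \<noteq> 0" using sum c(2) by auto
    then show False using assms(1) unfolding z_independent_def by blast
  qed
  have "coord x b = 0" if "\<forall>y\<in>M. coord y b = 0" for b
  proof -
    have "c x * coord x b = 0"
      using arg_cong[OF sum, of "\<lambda>z. coord z b"] that by (simp add: coord_add coord_sum)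
    then show ?thesis using \<open>c x \<noteq> 0\<close> by simp
  qed
  then show ?thesis unfolding basis_span_def by blast
qed

lemma finite_rank_subset_basis_span:
  assumes "finite_rank A"
  shows "\<exists>F. finite F \<and> F \<subseteq> B \<and> A \<subseteq> basis_span F"
proof -
  obtain N where N: "\<forall>M. M \<subseteq> A \<longrightarrow> z_independent M \<longrightarrow> card M \<le> N"
    using assms finite_rank_def by blast
  let ?P = "\<lambda>M. M \<subseteq> A \<and> z_independent M"
  have "?P {}" by (simp add: z_independent_def)
  moreover have "\<forall>M. ?P M \<longrightarrow> card M < Suc N" using N by (simp add: less_Suc_eq_le)
  ultimately obtain M where M: "?P M" "\<forall>M'. ?P M' \<longrightarrow> card M' \<le> card M"
    using ex_has_greatest_nat[of ?P "{}" card "Suc N"] by blast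
  have fin: "finite M" using M(1) z_independent_def by blast
  define F where "F = (\<Union>y\<in>M. {b. coord y b \<noteq> 0})"
  have "finite F" "F \<subseteq> B"
    unfolding F_def using fin finite_coord_support coord_nonbasis by auto
  moreover have "x \<in> basis_span F" if "x \<in> A" for x
  proof (cases "x \<in> M")
    case False
    have "\<not> z_independent (insert x M)"
    proof
      assume "z_independent (insert x M)"
      then have "card (insert x M) \<le> card M" using M that by blast
      then show False using fin False by simp
    qed
    then show ?thesis
      unfolding F_def using in_basis_span_if_dependent M(1) False by blast
  qed (auto simp: basis_span_def F_def)
  ultimately show ?thesis by blast
qed

section \<open>The back-and-forth game\<close>

definition basis_room :: "'a set \<Rightarrow> nat \<Rightarrow> bool" where
  "basis_room X k \<longleftrightarrow> (\<exists>F. finite F \<and> F \<subseteq> B \<inter> X \<and> k \<le> card F)"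

lemma basis_room_mono: "basis_room X k \<Longrightarrow> k' \<le> k \<Longrightarrow> basis_room X k'"
  unfolding basis_room_def by (meson order_trans)

text \<open>More basis elements than frame functionals give a nonzero element of \<open>Y\<close> killed by
  all of them; purity lets us divide it down to a primitive one.\<close>
lemma exists_fresh_primitive:
  fixes Y :: "'a set"
  assumes "frame Y r E L" "pure_subgrp Y" "basis_room Y (Suc r)"
  shows "\<exists>e\<in>Y. (\<forall>i<r. L i e = 0) \<and> primitive e"
proof -
  obtain F where F: "finite F" "F \<subseteq> B" "F \<subseteq> Y" "Suc r \<le> card F"
    using assms(3) unfolding basis_room_def by blast
  then obtain n where n: "\<exists>b\<in>F. n b \<noteq> 0" "\<forall>i\<in>{..<r}. (\<Sum>b\<in>F. n b * L i b) = 0"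
    using int_linear_dependence[of "{..<r}" F "\<lambda>b i. L i b"] by auto
  define y where "y = (\<Sum>b\<in>F. zsc (n b) b)"
  have L: "additive (L i)" if "i < r" for i
    using assms(1) that frame_def by blast
  have "y \<in> Y"
    unfolding y_def using assms(2) F(3) by (simp add: pure_subgrp_def subgrp_lincomb)
  have Ly: "L i y = 0" if "i < r" for i
    using n(2) that by (simp add: y_def additive.sum[OF L[OF that]] additive.zsc[OF L[OF that]])
  obtain b0 where "b0 \<in> F" "n b0 \<noteq> 0" using n(1) by blast
  then have "coord y b0 \<noteq> 0" unfolding y_def using coord_lincomb[OF F(1,2)] by simp
  then have "y \<noteq> 0" by auto
  then obtain m e where me: "m \<noteq> 0" "y = zsc m e" "primitive e"
    using primitive_factor by blast
  have "e \<in> Y" using assms(2) me(1,2) \<open>y \<in> Y\<close> unfolding pure_subgrp_def by simp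
  moreover have "L i e = 0" if "i < r" for i
    using Ly[OF that] me(1,2) by (simp add: additive.zsc[OF L[OF that]])
  ultimately show ?thesis using me(3) by blast
qed

lemma frame_decompose:
  fixes X :: "'a set"
  assumes "frame X r E L" "pure_subgrp X" "a \<in> X" "a \<noteq> lincomb E r (\<lambda>i. L i a)"
  shows "\<exists>m e. e \<in> X \<and> (\<forall>i<r. L i e = 0) \<and> primitive e \<and>
    a = lincomb E r (\<lambda>i. L i a) + zsc m e"
proof -
  define p where "p = lincomb E r (\<lambda>i. L i a)"
  have "subgrp X" using assms(2) pure_subgrp_def by blast
  then have "a - p \<in> X"
    using assms(1,3) subgrp_diff subgrp_lincomb_frame unfolding p_def by blast
  obtain m e where me: "m \<noteq> 0" "a - p = zsc m e" "primitive e"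
    using primitive_factor[of "a - p"] assms(4) unfolding p_def by auto
  have "e \<in> X"
    using assms(2) me(1,2) \<open>a - p \<in> X\<close> unfolding pure_subgrp_def by simp
  moreover have "L i e = 0" if "i < r" for i
  proof -
    have L: "additive (L i)" using assms(1) that frame_def by blast
    have "L i (a - p) = 0"
      using frame_lincomb[OF assms(1) that] by (simp add: additive.diff[OF L] p_def)
    then show ?thesis using me(1,2) by (simp add: additive.zsc[OF L])
  qed
  moreover have "a = p + zsc m e" using me(2) by (simp add: algebra_simps flip: me(2))
  ultimately show ?thesis using me(3) unfolding p_def by blast
qed

text \<open>The \<open>r + d\<close> basis elements on each side leave room for a fresh frame element in each
  of the \<open>d\<close> remaining rounds.\<close>
definition ef_position :: "'a set \<Rightarrow> 'a set \<Rightarrow> nat \<Rightarrow> nat \<Rightarrow> (nat \<Rightarrow> 'a) \<Rightarrow> (nat \<Rightarrow> 'a) \<Rightarrow> bool" where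
  "ef_position X Y d r E E' \<longleftrightarrow> (\<exists>L. frame X r E L) \<and> (\<exists>L'. frame Y r E' L') \<and>
     basis_room X (r + d) \<and> basis_room Y (r + d)"

lemma ef_position_sym: "ef_position X Y d r E E' \<longleftrightarrow> ef_position Y X d r E' E"
  unfolding ef_position_def by blast

lemma ef_position_mono: "ef_position X Y d r E E' \<Longrightarrow> d' \<le> d \<Longrightarrow> ef_position X Y d' r E E'"
  unfolding ef_position_def by (meson add_left_mono basis_room_mono)

lemma back_and_forth_step:
  fixes X Y :: "'a set"
  assumes pos: "ef_position X Y (Suc d) r E E'" and "pure_subgrp X" "pure_subgrp Y" "a \<in> X"
  shows "\<exists>b\<in>Y. \<exists>r2 E2 E2'. ef_position X Y d r2 E2 E2' \<and> same_coords E2 E2' r2 a b \<and>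
    (\<forall>x y. same_coords E E' r x y \<longrightarrow> same_coords E2 E2' r2 x y)"
proof -
  obtain L L' where L: "frame X r E L" and L': "frame Y r E' L'"
    and room: "basis_room X (Suc r + d)" "basis_room Y (Suc r + d)"
    using pos unfolding ef_position_def by auto
  have Y: "subgrp Y" using \<open>pure_subgrp Y\<close> pure_subgrp_def by blast
  define p where "p = lincomb E' r (\<lambda>i. L i a)"
  show ?thesis
  proof (cases "a = lincomb E r (\<lambda>i. L i a)")
    case True
    then have "same_coords E E' r a p" unfolding same_coords_def p_def by blast
    moreover have "p \<in> Y" unfolding p_def by (rule subgrp_lincomb_frame[OF Y L'])
    moreover have "ef_position X Y d r E E'" using ef_position_mono[OF pos] by simp
    ultimately show ?thesis by blast
  next
    case False
    then obtain m e where e: "e \<in> X" "\<forall>i<r. L i e = 0" "primitive e"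
      and a: "a = lincomb E r (\<lambda>i. L i a) + zsc m e"
      using frame_decompose[OF L \<open>pure_subgrp X\<close> \<open>a \<in> X\<close>] by blast
    obtain e' where e': "e' \<in> Y" "\<forall>i<r. L' i e' = 0" "primitive e'"
      using exists_fresh_primitive[OF L' \<open>pure_subgrp Y\<close>] basis_room_mono[OF room(2)] by auto
    have "ef_position X Y d (Suc r) (E(r := e)) (E'(r := e'))"
      using frame_extend[OF L e] frame_extend[OF L' e'] room unfolding ef_position_def by simp
    moreover have "same_coords (E(r := e)) (E'(r := e')) (Suc r) a (p + zsc m e')"
    proof -
      have "a = lincomb (E(r := e)) (Suc r) ((\<lambda>i. L i a)(r := m))"
        "p + zsc m e' = lincomb (E'(r := e')) (Suc r) ((\<lambda>i. L i a)(r := m))"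
        using a by (simp_all only: lincomb_fun_upd p_def)
      then show ?thesis unfolding same_coords_def by blast
    qed
    moreover have "p + zsc m e' \<in> Y"
      using Y e'(1) subgrp_lincomb_frame[OF Y L'] subgrp_zsc[OF Y] unfolding p_def subgrp_def
      by blast
    ultimately show ?thesis using same_coords_extend by blast
  qed
qed

lemma ef_quantifier_step:
  fixes X Y :: "'a set"
  assumes pos: "ef_position X Y (Suc d) r E E'" and pure: "pure_subgrp X" "pure_subgrp Y"
    and var_agree: "\<forall>v\<in>V - {n}. same_coords E E' r (\<sigma> v) (\<tau> v)"
    and const_agree: "\<forall>c\<in>C. same_coords E E' r c c"
    and IH: "\<And>r2 E2 E2' \<sigma>' \<tau>'. ef_position X Y d r2 E2 E2' \<Longrightarrow>
      \<forall>v\<in>V. same_coords E2 E2' r2 (\<sigma>' v) (\<tau>' v) \<Longrightarrow> \<forall>c\<in>C. same_coords E2 E2' r2 c c \<Longrightarrow>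
      P \<sigma>' \<longleftrightarrow> Q \<tau>'"
  shows "(\<forall>a\<in>X. \<exists>b\<in>Y. P (\<sigma>(n := a)) \<longleftrightarrow> Q (\<tau>(n := b))) \<and>
    (\<forall>b\<in>Y. \<exists>a\<in>X. P (\<sigma>(n := a)) \<longleftrightarrow> Q (\<tau>(n := b)))"
proof (intro conjI ballI)
  fix a assume "a \<in> X"
  then obtain b r2 E2 E2' where "b \<in> Y" "ef_position X Y d r2 E2 E2'" "same_coords E2 E2' r2 a b"
    "\<forall>x y. same_coords E E' r x y \<longrightarrow> same_coords E2 E2' r2 x y"
    using back_and_forth_step[OF pos pure] by blast
  moreover from this have "P (\<sigma>(n := a)) \<longleftrightarrow> Q (\<tau>(n := b))"
    using var_agree const_agree by (intro IH[of r2 E2 E2']) auto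
  ultimately show "\<exists>b\<in>Y. P (\<sigma>(n := a)) \<longleftrightarrow> Q (\<tau>(n := b))" by blast
next
  fix b assume "b \<in> Y"
  moreover have "ef_position Y X (Suc d) r E' E" using pos ef_position_sym by blast
  ultimately obtain a r2 E2 E2' where "a \<in> X" "ef_position Y X d r2 E2 E2'" "same_coords E2 E2' r2 b a"
    "\<forall>x y. same_coords E' E r x y \<longrightarrow> same_coords E2 E2' r2 x y"
    using back_and_forth_step[OF _ pure(2,1)] by blast
  moreover from this have "P (\<sigma>(n := a)) \<longleftrightarrow> Q (\<tau>(n := b))"
    using var_agree const_agree by (intro IH[of r2 E2' E2]) (auto simp: ef_position_sym same_coords_sym)
  ultimately show "\<exists>a\<in>X. P (\<sigma>(n := a)) \<longleftrightarrow> Q (\<tau>(n := b))" by blast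
qed

lemma sat_eq_if_ef_position:
  fixes X Y :: "'a set"
  assumes "pure_subgrp X" "pure_subgrp Y"
  shows "ef_position X Y (depth \<phi>) r E E' \<Longrightarrow>
    \<forall>v\<in>fvars \<phi>. same_coords E E' r (\<sigma> v) (\<tau> v) \<Longrightarrow> \<forall>c\<in>fconsts \<phi>. same_coords E E' r c c \<Longrightarrow>
    sat X \<sigma> \<phi> \<longleftrightarrow> sat Y \<tau> \<phi>"
proof (induction \<phi> arbitrary: r E E' \<sigma> \<tau>)
  case (Eq s t)
  then obtain L L' where L: "frame X r E L" and L': "frame Y r E' L'"
    unfolding ef_position_def by blast
  obtain ns nt where
    "tm_eval \<sigma> s = lincomb E r ns" "tm_eval \<tau> s = lincomb E' r ns"
    "tm_eval \<sigma> t = lincomb E r nt" "tm_eval \<tau> t = lincomb E' r nt"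
    using same_coords_tm_eval[of s E E' r \<sigma> \<tau>] same_coords_tm_eval[of t E E' r \<sigma> \<tau>] Eq.prems(2,3)
    unfolding same_coords_def by auto
  then show ?case using lincomb_eq_iff[OF L] lincomb_eq_iff[OF L'] by simp
next
  case (Conj p q)
  have "sat X \<sigma> p \<longleftrightarrow> sat Y \<tau> p"
    by (rule Conj.IH(1)) (use Conj.prems in \<open>auto intro: ef_position_mono\<close>)
  moreover have "sat X \<sigma> q \<longleftrightarrow> sat Y \<tau> q"
    by (rule Conj.IH(2)) (use Conj.prems in \<open>auto intro: ef_position_mono\<close>)
  ultimately show ?case by simp
next
  case (Disj p q)
  have "sat X \<sigma> p \<longleftrightarrow> sat Y \<tau> p"
    by (rule Disj.IH(1)) (use Disj.prems in \<open>auto intro: ef_position_mono\<close>)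
  moreover have "sat X \<sigma> q \<longleftrightarrow> sat Y \<tau> q"
    by (rule Disj.IH(2)) (use Disj.prems in \<open>auto intro: ef_position_mono\<close>)
  ultimately show ?case by simp
next
  case (Imp p q)
  have "sat X \<sigma> p \<longleftrightarrow> sat Y \<tau> p"
    by (rule Imp.IH(1)) (use Imp.prems in \<open>auto intro: ef_position_mono\<close>)
  moreover have "sat X \<sigma> q \<longleftrightarrow> sat Y \<tau> q"
    by (rule Imp.IH(2)) (use Imp.prems in \<open>auto intro: ef_position_mono\<close>)
  ultimately show ?case by simp
next
  case (Ex n p)
  then have "(\<forall>a\<in>X. \<exists>b\<in>Y. sat X (\<sigma>(n := a)) p \<longleftrightarrow> sat Y (\<tau>(n := b)) p) \<and>
    (\<forall>b\<in>Y. \<exists>a\<in>X. sat X (\<sigma>(n := a)) p \<longleftrightarrow> sat Y (\<tau>(n := b)) p)"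
    by (intro ef_quantifier_step[OF _ assms, where V = "fvars p"]) auto
  then show ?case by auto
next
  case (All n p)
  then have "(\<forall>a\<in>X. \<exists>b\<in>Y. sat X (\<sigma>(n := a)) p \<longleftrightarrow> sat Y (\<tau>(n := b)) p) \<and>
    (\<forall>b\<in>Y. \<exists>a\<in>X. sat X (\<sigma>(n := a)) p \<longleftrightarrow> sat Y (\<tau>(n := b)) p)"
    by (intro ef_quantifier_step[OF _ assms, where V = "fvars p"]) auto
  then show ?case by auto
qed simp_all

lemma frame_basis_enum:
  assumes "bij_betw h {..<r} G" "G \<subseteq> B" "G \<subseteq> X"
  shows "frame X r h (\<lambda>i x. coord x (h i))"
proof -
  have "h j \<in> B" "h j \<in> X" if "j < r" for j
    using assms that unfolding bij_betw_def by auto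
  moreover have "h i = h j \<longleftrightarrow> i = j" if "i < r" "j < r" for i j
    using assms(1) that unfolding bij_betw_def inj_on_def by auto
  ultimately show ?thesis
    unfolding frame_def by (auto simp: additive_coord coord_basis)
qed

lemma same_coords_basis_enum:
  assumes "bij_betw h {..<r} G" "finite G" "{b. coord c b \<noteq> 0} \<subseteq> G"
  shows "same_coords h h r c c"
proof -
  have "c = (\<Sum>b\<in>G. zsc (coord c b) b)" by (rule coord_expansion[OF assms(2,3)])
  also have "\<dots> = lincomb h r (\<lambda>i. coord c (h i))"
    unfolding lincomb_def by (rule sum.reindex_bij_betw[OF assms(1), symmetric])
  finally show ?thesis unfolding same_coords_def by blast
qed

text \<open>A sentence only sees the coordinates of its constants on a finite \<open>G \<subseteq> B\<close>; a pure
  subgroup containing \<open>G\<close> and \<open>depth \<theta>\<close> further basis elements leaves room for every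
  round of the back-and-forth game against the whole group.\<close>
lemma sat_sentence_eq_sat_UNIV:
  fixes \<theta> :: "'a fm"
  assumes "infinite B" "fvars \<theta> = {}"
  shows "\<exists>F. finite F \<and> F \<subseteq> B \<and> fconsts \<theta> \<subseteq> basis_span F \<and>
    (\<forall>A. pure_subgrp A \<longrightarrow> F \<subseteq> A \<longrightarrow> (sat A (\<lambda>_. 0) \<theta> \<longleftrightarrow> sat UNIV (\<lambda>_. 0) \<theta>))"
proof -
  define G where "G = (\<Union>c\<in>fconsts \<theta>. {b. coord c b \<noteq> 0})"
  have G: "finite G" "G \<subseteq> B"
    unfolding G_def using finite_fconsts finite_coord_support coord_nonbasis by auto
  define r where "r = card G"
  obtain H where H: "finite H" "card H = r + depth \<theta>" "H \<subseteq> B"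
    using infinite_arbitrarily_large[OF assms(1)] by blast
  define F where "F = G \<union> H"
  have F: "finite F" "F \<subseteq> B" "r + depth \<theta> \<le> card F"
    using G H card_mono[of F H] by (auto simp: F_def)
  obtain h where h: "bij_betw h {..<r} G"
    using ex_bij_betw_nat_finite[OF G(1)] by (auto simp: r_def atLeast0LessThan)
  have "sat A (\<lambda>_. 0) \<theta> \<longleftrightarrow> sat UNIV (\<lambda>_. 0) \<theta>" if "pure_subgrp A" "F \<subseteq> A" for A
  proof (rule sat_eq_if_ef_position[OF that(1) pure_subgrp_UNIV])
    have "basis_room A (r + depth \<theta>)" "basis_room UNIV (r + depth \<theta>)"
      unfolding basis_room_def using F H that(2) by auto
    then show "ef_position A UNIV (depth \<theta>) r h h"
      unfolding ef_position_def using frame_basis_enum[OF h G(2)] that(2) by (auto simp: F_def)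
    show "\<forall>c\<in>fconsts \<theta>. same_coords h h r c c"
      using same_coords_basis_enum[OF h G(1)] by (auto simp: G_def)
  qed (simp add: assms(2))
  moreover have "fconsts \<theta> \<subseteq> basis_span F"
    unfolding basis_span_def F_def G_def by blast
  ultimately show ?thesis using F by blast
qed

lemma basis_span_mem_finite_rank_summands:
  "finite F \<Longrightarrow> F \<subseteq> B \<Longrightarrow> basis_span F \<in> finite_rank_summands"
  by (simp add: subgrp_basis_span finite_rank_basis_span direct_summand_basis_span)

lemma finite_rank_summands_directed:
  fixes A A' :: "'a set"
  assumes "A \<in> finite_rank_summands" "A' \<in> finite_rank_summands"
  shows "\<exists>C\<in>finite_rank_summands. A \<subseteq> C \<and> A' \<subseteq> C"
proof -
  obtain F F' where F: "finite F" "F \<subseteq> B" "A \<subseteq> basis_span F"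
    and F': "finite F'" "F' \<subseteq> B" "A' \<subseteq> basis_span F'"
    using assms finite_rank_subset_basis_span by (metis mem_Collect_eq)
  have "basis_span (F \<union> F') \<in> finite_rank_summands"
    using F F' by (intro basis_span_mem_finite_rank_summands) auto
  moreover have "A \<subseteq> basis_span (F \<union> F')" "A' \<subseteq> basis_span (F \<union> F')"
    using F(3) F'(3) basis_span_mono[of F "F \<union> F'"] basis_span_mono[of F' "F \<union> F'"] by auto
  ultimately show ?thesis by blast
qed

lemma Th_eventually_Th_UNIV:
  fixes \<theta> :: "'a fm"
  assumes "infinite B"
  shows "\<exists>A\<in>finite_rank_summands. \<forall>C\<in>finite_rank_summands. A \<subseteq> C \<longrightarrow> (\<theta> \<in> Th C \<longleftrightarrow> \<theta> \<in> Th UNIV)"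
proof (cases "fvars \<theta> = {}")
  case True
  then obtain F where F: "finite F" "F \<subseteq> B" "fconsts \<theta> \<subseteq> basis_span F"
    and sat: "\<forall>A. pure_subgrp A \<longrightarrow> F \<subseteq> A \<longrightarrow> (sat A (\<lambda>_. 0) \<theta> \<longleftrightarrow> sat UNIV (\<lambda>_. 0) \<theta>)"
    using sat_sentence_eq_sat_UNIV[OF assms True] by blast
  have "\<theta> \<in> Th C \<longleftrightarrow> \<theta> \<in> Th UNIV"
    if C: "C \<in> finite_rank_summands" "basis_span F \<subseteq> C" for C
  proof -
    have "pure_subgrp C" using C(1) pure_if_direct_summand by simp
    moreover have "F \<subseteq> C" using subset_basis_span[OF F(2)] C(2) by (rule order_trans)
    ultimately have "sat C (\<lambda>_. 0) \<theta> \<longleftrightarrow> sat UNIV (\<lambda>_. 0) \<theta>" by (rule sat[rule_format])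
    moreover have "fconsts \<theta> \<subseteq> C" using F(3) C(2) by (rule order_trans)
    ultimately show ?thesis using True unfolding Th_def by simp
  qed
  then show ?thesis using basis_span_mem_finite_rank_summands[OF F(1,2)] by blast
next
  case False
  then have "\<theta> \<notin> Th C" for C :: "'a set" by (simp add: Th_def)
  then show ?thesis using basis_span_mem_finite_rank_summands[of "{}"] by blast
qed

end

theorem mainTheorem13:
  assumes "free_abelian_infinite_rank TYPE('a::ab_group_add)"
  shows "has_lim_I {A::'a set. subgrp A \<and> finite_rank A \<and> direct_summand A} Th (Th UNIV)"
proof -
  obtain B :: "'a set" where "free_basis B" "infinite B"
    using assms unfolding free_abelian_infinite_rank_def by blast
  interpret free_abelian_basis B by unfold_locales fact
  show ?thesis
    using has_lim_I_if_eventually_constant[OF finite_rank_summands_directed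
        Th_eventually_Th_UNIV[OF \<open>infinite B\<close>]] .
qed

end
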